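(* For any instance of the Max-Cut problem on a graph with $n$ vertices, the DLA of QWOA satisfies $\dim(\mathfrak g_{\mathrm{QWOA,Max\text{-}Cut}})=\mathcal O(n^4)$.
   Context: Max-Cut on an undirected simple graph $G=(V,E)$, $V=\{1,\dots,n\}$: feasible solutions are all $z\in\{0,1\}^n$ and the cost $C(z)$ is the number of edges $\{u,v\}$ with $z_u\ne z_v$. On $\mathbb C^{2^n}$, $H_C$ is diagonal with $H_C|z\rangle=C(z)|z\rangle$ and $H_M$ is the $2^n\times 2^n$ all-ones matrix (equivalent up to identity to the complete-graph adjacency matrix). $\mathfrak g_{\mathrm{QWOA,Max\text{-}Cut}}$ is the real Lie algebra generated by $iH_C$ and $iH_M$ (smallest real subspace containing them and closed under commutators); its dimension is its real dimension. *)

theory Defs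
  imports Complex_Main "HOL-Library.Function_Algebras"
begin

text \<open>Computational basis states |z>, z in {0,1}^n, are encoded by the set
  S = {v in {1..n}. z_v = 1} in Pow {1..n}.  Operators on C^(2^n) are encoded as
  complex matrices indexed by such sets, i.e. functions nat set => nat set => complex
  that vanish outside Pow {1..n} x Pow {1..n}.  The pointwise algebraic structure
  on functions (Function_Algebras) gives the additive group; real scalar
  multiplication is rscale.\<close>

type_synonym cmat = "nat set \<Rightarrow> nat set \<Rightarrow> complex"

definition basis_states :: "nat \<Rightarrow> nat set set" where
  "basis_states n = Pow {1..n}"

definition simple_graph :: "nat \<Rightarrow> (nat \<Rightarrow> nat \<Rightarrow> bool) \<Rightarrow> bool" where
  "simple_graph n E \<longleftrightarrow> (\<forall>u v. E u v \<longrightarrow> E v u) \<and> (\<forall>u. \<not> E u u)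
     \<and> (\<forall>u v. E u v \<longrightarrow> u \<in> {1..n} \<and> v \<in> {1..n})"

definition cut_value :: "nat \<Rightarrow> (nat \<Rightarrow> nat \<Rightarrow> bool) \<Rightarrow> nat set \<Rightarrow> nat" where
  "cut_value n E S = card {(u, v). 1 \<le> u \<and> u < v \<and> v \<le> n \<and> E u v \<and> ((u \<in> S) \<noteq> (v \<in> S))}"

definition H_C :: "nat \<Rightarrow> (nat \<Rightarrow> nat \<Rightarrow> bool) \<Rightarrow> cmat" where
  "H_C n E = (\<lambda>S T. if S = T \<and> S \<in> basis_states n then of_nat (cut_value n E S) else 0)"

definition H_M :: "nat \<Rightarrow> cmat" where
  "H_M n = (\<lambda>S T. if S \<in> basis_states n \<and> T \<in> basis_states n then 1 else 0)"

definition mmul :: "nat \<Rightarrow> cmat \<Rightarrow> cmat \<Rightarrow> cmat" where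
  "mmul n A B = (\<lambda>S T. \<Sum>R\<in>basis_states n. A S R * B R T)"

definition commutator :: "nat \<Rightarrow> cmat \<Rightarrow> cmat \<Rightarrow> cmat" where
  "commutator n A B = mmul n A B - mmul n B A"

definition smul_i :: "cmat \<Rightarrow> cmat" where
  "smul_i A = (\<lambda>S T. \<i> * A S T)"

definition rscale :: "real \<Rightarrow> cmat \<Rightarrow> cmat" where
  "rscale r A = (\<lambda>S T. complex_of_real r * A S T)"

definition qwoa_dla :: "nat \<Rightarrow> (nat \<Rightarrow> nat \<Rightarrow> bool) \<Rightarrow> cmat set" where
  "qwoa_dla n E = \<Inter> {L. module.subspace rscale L
       \<and> smul_i (H_C n E) \<in> L \<and> smul_i (H_M n) \<in> L
       \<and> (\<forall>A\<in>L. \<forall>B\<in>L. commutator n A B \<in> L)}"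

definition real_dim :: "cmat set \<Rightarrow> nat" where
  "real_dim L = vector_space.dim rscale L"

end

theory Submission
  imports Defs
begin

text \<open>Every element of the Lie algebra is a real multiple of i H_C plus a matrix whose
  (S, T) entry depends only on the cut values C(S) and C(T).  Matrices of this second
  kind form a real space that contains i H_M and is closed under products, because the
  sum over intermediate states in a product regroups by cut value; and commuting one of
  them with the diagonal matrix i H_C multiplies its (S, T) entry by i (C(S) - C(T)).
  Since cut values lie in {0..n^2} for every edge relation, the space has real
  dimension at most 2 (n^2 + 1)^2, so the Lie algebra has dimension at most 1 + 2 (n^2 + 1)^2 \<le> 9 n^4.\<close>

interpretation rs: vector_space rscale
  by unfold_locales (auto simp: rscale_def fun_eq_iff algebra_simps)

lemma sum_apply2: "(sum F A) x y = (\<Sum>a\<in>A. F a x y)"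
  by (induction A rule: infinite_finite_induct) auto

lemma mmul_add_left: "mmul n (A + B) C = mmul n A C + mmul n B C"
  by (simp add: mmul_def fun_eq_iff distrib_right sum.distrib)

lemma mmul_add_right: "mmul n C (A + B) = mmul n C A + mmul n C B"
  by (simp add: mmul_def fun_eq_iff distrib_left sum.distrib)

lemma mmul_scale_left: "mmul n (rscale r A) C = rscale r (mmul n A C)"
  by (simp add: mmul_def rscale_def fun_eq_iff sum_distrib_left mult.assoc)

lemma mmul_scale_right: "mmul n C (rscale r A) = rscale r (mmul n C A)"
  by (simp add: mmul_def rscale_def fun_eq_iff sum_distrib_left algebra_simps)

lemma commutator_add_left: "commutator n (A + B) C = commutator n A C + commutator n B C"
  by (simp add: commutator_def mmul_add_left mmul_add_right)

lemma commutator_add_right: "commutator n C (A + B) = commutator n C A + commutator n C B"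
  by (simp add: commutator_def mmul_add_left mmul_add_right)

lemma commutator_scale_left: "commutator n (rscale r A) B = rscale r (commutator n A B)"
  by (simp add: commutator_def mmul_scale_left mmul_scale_right rs.scale_right_diff_distrib)

lemma commutator_scale_right: "commutator n A (rscale r B) = rscale r (commutator n A B)"
  by (simp add: commutator_def mmul_scale_left mmul_scale_right rs.scale_right_diff_distrib)

lemma commutator_self [simp]: "commutator n A A = 0"
  by (simp add: commutator_def)

definition diag_matrix :: "nat \<Rightarrow> (nat set \<Rightarrow> complex) \<Rightarrow> cmat" where
  "diag_matrix n d = (\<lambda>S T. if S = T \<and> S \<in> basis_states n then d S else 0)"

definition block_matrix :: "nat \<Rightarrow> (nat set \<Rightarrow> nat) \<Rightarrow> (nat \<Rightarrow> nat \<Rightarrow> complex) \<Rightarrow> cmat" where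
  "block_matrix n c f = (\<lambda>S T. if S \<in> basis_states n \<and> T \<in> basis_states n
      then f (c S) (c T) else 0)"

lemma smul_i_H_C: "smul_i (H_C n E) = diag_matrix n (\<lambda>S. \<i> * of_nat (cut_value n E S))"
  by (auto simp: smul_i_def H_C_def diag_matrix_def fun_eq_iff)

lemma smul_i_H_M: "smul_i (H_M n) = block_matrix n c (\<lambda>_ _. \<i>)"
  by (simp add: smul_i_def H_M_def block_matrix_def fun_eq_iff)

lemma block_matrix_add:
  "block_matrix n c f + block_matrix n c g = block_matrix n c (\<lambda>j l. f j l + g j l)"
  by (simp add: block_matrix_def fun_eq_iff)

lemma block_matrix_scale:
  "rscale r (block_matrix n c f) = block_matrix n c (\<lambda>j l. of_real r * f j l)"
  by (simp add: rscale_def block_matrix_def fun_eq_iff)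

lemma block_matrix_sum:
  "(\<Sum>a\<in>A. block_matrix n c (F a)) = block_matrix n c (\<lambda>j l. \<Sum>a\<in>A. F a j l)"
  by (auto simp: block_matrix_def fun_eq_iff sum_apply2)

lemma mmul_block_matrix:
  "mmul n (block_matrix n c f) (block_matrix n c g) =
   block_matrix n c (\<lambda>j l. \<Sum>R\<in>basis_states n. f j (c R) * g (c R) l)"
  by (auto simp: mmul_def block_matrix_def fun_eq_iff intro!: sum.cong)

lemma mmul_diag_block_matrix:
  "mmul n (diag_matrix n (\<lambda>S. \<phi> (c S))) (block_matrix n c g) =
   block_matrix n c (\<lambda>j l. \<phi> j * g j l)"
proof -
  have "(\<Sum>R\<in>basis_states n. diag_matrix n (\<lambda>S. \<phi> (c S)) S R * block_matrix n c g R T) =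
        block_matrix n c (\<lambda>j l. \<phi> j * g j l) S T" for S T
    by (cases "S \<in> basis_states n")
       (simp_all add: diag_matrix_def block_matrix_def if_distrib[of "\<lambda>x. x * _"] sum.delta
         basis_states_def cong: if_cong)
  then show ?thesis by (simp add: mmul_def fun_eq_iff)
qed

lemma mmul_block_diag_matrix:
  "mmul n (block_matrix n c f) (diag_matrix n (\<lambda>S. \<phi> (c S))) =
   block_matrix n c (\<lambda>j l. f j l * \<phi> l)"
proof -
  have "(\<Sum>R\<in>basis_states n. block_matrix n c f S R * diag_matrix n (\<lambda>S. \<phi> (c S)) R T) =
        block_matrix n c (\<lambda>j l. f j l * \<phi> l) S T" for S T
    by (cases "T \<in> basis_states n")
       (simp_all add: diag_matrix_def block_matrix_def if_distrib[of "\<lambda>x. _ * x"] sum.delta'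
         basis_states_def cong: if_cong)
  then show ?thesis by (simp add: mmul_def fun_eq_iff)
qed

lemma commutator_diag_block_matrix:
  "commutator n (diag_matrix n (\<lambda>S. \<phi> (c S))) (block_matrix n c g) =
   block_matrix n c (\<lambda>j l. (\<phi> j - \<phi> l) * g j l)"
  unfolding commutator_def mmul_diag_block_matrix mmul_block_diag_matrix
  by (simp add: block_matrix_def fun_eq_iff algebra_simps)

lemma commutator_block_diag_matrix:
  "commutator n (block_matrix n c f) (diag_matrix n (\<lambda>S. \<phi> (c S))) =
   block_matrix n c (\<lambda>j l. (\<phi> l - \<phi> j) * f j l)"
  unfolding commutator_def mmul_diag_block_matrix mmul_block_diag_matrix
  by (simp add: block_matrix_def fun_eq_iff algebra_simps)

lemma commutator_block_matrix:
  "commutator n (block_matrix n c f) (block_matrix n c g) =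
   block_matrix n c (\<lambda>j l. \<Sum>R\<in>basis_states n. f j (c R) * g (c R) l - g j (c R) * f (c R) l)"
  unfolding commutator_def mmul_block_matrix
  by (simp add: block_matrix_def fun_eq_iff sum_subtractf)

lemma subspace_range_block_matrix: "rs.subspace (range (block_matrix n c))"
proof -
  have "0 = block_matrix n c 0"
    by (simp add: block_matrix_def fun_eq_iff)
  then show ?thesis
    unfolding rs.subspace_def by (auto simp: block_matrix_add block_matrix_scale)
qed

definition diag_block_span :: "nat \<Rightarrow> (nat set \<Rightarrow> nat) \<Rightarrow> (nat \<Rightarrow> complex) \<Rightarrow> cmat set" where
  "diag_block_span n c \<phi> =
     rs.span (insert (diag_matrix n (\<lambda>S. \<phi> (c S))) (range (block_matrix n c)))"

lemma diag_block_spanE: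
  assumes "A \<in> diag_block_span n c \<phi>"
  obtains r f where "A = rscale r (diag_matrix n (\<lambda>S. \<phi> (c S))) + block_matrix n c f"
proof -
  have span_blocks: "rs.span (range (block_matrix n c)) = range (block_matrix n c)"
    using subspace_range_block_matrix by (rule rs.span_eq_iff[THEN iffD2])
  obtain r where "A - rscale r (diag_matrix n (\<lambda>S. \<phi> (c S))) \<in> range (block_matrix n c)"
    using assms by (auto simp: diag_block_span_def rs.span_breakdown_eq span_blocks)
  then show thesis
    using that by (metis add.commute diff_add_cancel rangeE)
qed

lemma commutator_diag_block_span:
  assumes "A \<in> diag_block_span n c \<phi>" "B \<in> diag_block_span n c \<phi>"
  shows "commutator n A B \<in> diag_block_span n c \<phi>"
proof -
  let ?D = "diag_matrix n (\<lambda>S. \<phi> (c S))"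
  obtain r f s g where
    A: "A = rscale r ?D + block_matrix n c f" and B: "B = rscale s ?D + block_matrix n c g"
    using assms by (metis diag_block_spanE)
  have "commutator n A B =
     rscale r (commutator n ?D (block_matrix n c g)) +
     rscale s (commutator n (block_matrix n c f) ?D) +
     commutator n (block_matrix n c f) (block_matrix n c g)"
    unfolding A B
    by (simp add: commutator_add_left commutator_add_right commutator_scale_left
        commutator_scale_right)
  also have "\<dots> \<in> range (block_matrix n c)"
    by (simp add: commutator_diag_block_matrix commutator_block_diag_matrix
        commutator_block_matrix block_matrix_scale block_matrix_add)
  finally show ?thesis
    unfolding diag_block_span_def by (intro rs.span_base insertI2)
qed

lemma qwoa_dla_subset_diag_block_span:
  "qwoa_dla n E \<subseteq> diag_block_span n (cut_value n E) (\<lambda>j. \<i> * of_nat j)"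
  unfolding qwoa_dla_def
proof (rule Inter_lower, safe)
  show "rs.subspace (diag_block_span n (cut_value n E) (\<lambda>j. \<i> * of_nat j))"
    by (simp add: diag_block_span_def)
  show "smul_i (H_C n E) \<in> diag_block_span n (cut_value n E) (\<lambda>j. \<i> * of_nat j)"
    by (simp add: diag_block_span_def smul_i_H_C rs.span_base)
  show "smul_i (H_M n) \<in> diag_block_span n (cut_value n E) (\<lambda>j. \<i> * of_nat j)"
    by (simp add: diag_block_span_def smul_i_H_M[where c = "cut_value n E"] rs.span_base)
qed (rule commutator_diag_block_span)

definition block_units :: "nat \<Rightarrow> (nat set \<Rightarrow> nat) \<Rightarrow> nat \<Rightarrow> cmat set" where
  "block_units n c K = (\<lambda>((j, l), z). block_matrix n c (\<lambda>a b. if a = j \<and> b = l then z else 0))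
     ` (({0..K} \<times> {0..K}) \<times> {1, \<i>})"

lemma finite_block_units: "finite (block_units n c K)"
  by (simp add: block_units_def)

lemma card_block_units: "card (block_units n c K) \<le> 2 * (K + 1)^2"
proof -
  have "card (block_units n c K) \<le> card (({0..K} \<times> {0..K}) \<times> {1, \<i>})"
    unfolding block_units_def by (rule card_image_le) simp
  also have "\<dots> = 2 * (K + 1)^2"
    by (simp add: card_cartesian_product power2_eq_square)
  finally show ?thesis .
qed

lemma block_matrix_cong_bounded:
  assumes "\<forall>S\<in>basis_states n. c S \<le> K" and "\<forall>j\<le>K. \<forall>l\<le>K. f j l = g j l"
  shows "block_matrix n c f = block_matrix n c g"
  using assms by (simp add: block_matrix_def fun_eq_iff)

lemma block_matrix_in_span_block_units:
  assumes "\<forall>S\<in>basis_states n. c S \<le> K"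
  shows "block_matrix n c f \<in> rs.span (block_units n c K)"
proof -
  let ?P = "{0..K} \<times> {0..K}"
  let ?e = "\<lambda>j l z a b. if a = j \<and> b = l then z else (0::complex)"
  let ?g = "\<lambda>(j, l) a b. of_real (Re (f j l)) * ?e j l 1 a b + of_real (Im (f j l)) * ?e j l \<i> a b"
  let ?h = "\<lambda>(j, l). rscale (Re (f j l)) (block_matrix n c (?e j l 1))
                   + rscale (Im (f j l)) (block_matrix n c (?e j l \<i>))"
  have "block_matrix n c f = block_matrix n c (\<lambda>a b. \<Sum>p\<in>?P. ?g p a b)"
  proof (rule block_matrix_cong_bounded[OF assms], intro allI impI)
    fix a b :: nat assume "a \<le> K" "b \<le> K"
    have "(\<Sum>p\<in>?P. ?g p a b) =
        (\<Sum>p\<in>?P. if p = (a, b) then of_real (Re (f a b)) + of_real (Im (f a b)) * \<i> else 0)"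
      by (intro sum.cong) (auto split: if_splits)
    also have "\<dots> = of_real (Re (f a b)) + of_real (Im (f a b)) * \<i>"
      using \<open>a \<le> K\<close> \<open>b \<le> K\<close> by simp
    also have "\<dots> = f a b"
      by (simp add: complex_eq_iff)
    finally show "f a b = (\<Sum>p\<in>?P. ?g p a b)"
      by simp
  qed
  also have "\<dots> = (\<Sum>p\<in>?P. ?h p)"
    by (simp add: block_matrix_sum block_matrix_scale block_matrix_add case_prod_beta)
  also have "\<dots> \<in> rs.span (block_units n c K)"
  proof (rule rs.span_sum)
    fix p assume "p \<in> ?P"
    then obtain j l where p: "p = (j, l)" "j \<le> K" "l \<le> K"
      by auto
    have "block_matrix n c (?e j l z) \<in> block_units n c K" if "z \<in> {1, \<i>}" for z
      unfolding block_units_def using p that by (intro rev_image_eqI[of "((j, l), z)"]) auto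
    then show "?h p \<in> rs.span (block_units n c K)"
      unfolding p prod.case by (intro rs.span_add rs.span_scale rs.span_base) simp_all
  qed
  finally show ?thesis .
qed

lemma dim_le_if_subset_diag_block_span:
  assumes "\<forall>S\<in>basis_states n. c S \<le> K" and "V \<subseteq> diag_block_span n c \<phi>"
  shows "rs.dim V \<le> 1 + 2 * (K + 1)^2"
proof -
  let ?D = "diag_matrix n (\<lambda>S. \<phi> (c S))"
  have "range (block_matrix n c) \<subseteq> rs.span (insert ?D (block_units n c K))"
    using block_matrix_in_span_block_units[OF assms(1)] rs.span_mono[OF subset_insertI] by blast
  then have "diag_block_span n c \<phi> \<subseteq> rs.span (insert ?D (block_units n c K))"
    unfolding diag_block_span_def by (intro rs.span_minimal) (auto intro: rs.span_base)
  then have "rs.dim V \<le> card (insert ?D (block_units n c K))"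
    using assms(2)
    by (intro rs.dim_le_card) (auto simp: finite_block_units)
  also have "\<dots> \<le> 1 + card (block_units n c K)"
    by (simp add: card_insert_if finite_block_units)
  finally show ?thesis
    using card_block_units[of n c K] by linarith
qed

lemma cut_value_le: "cut_value n E S \<le> n * n"
proof -
  have "cut_value n E S \<le> card ({1..n} \<times> {1..n})"
    unfolding cut_value_def by (intro card_mono) auto
  then show ?thesis
    by simp
qed

lemma quartic_bound:
  fixes n :: nat
  assumes "1 \<le> n"
  shows "1 + 2 * (n * n + 1)^2 \<le> 9 * n ^ 4"
proof -
  define m where "m = n * n"
  have "1 \<le> m" and "m \<le> m * m"
    using assms by (simp_all add: m_def)
  moreover have "(m + 1)^2 = m * m + 2 * m + 1"
    by (simp add: power2_eq_square algebra_simps)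
  ultimately have "1 + 2 * (m + 1)^2 \<le> 9 * (m * m)"
    by linarith
  then show ?thesis
    by (simp add: m_def power4_eq_xxxx)
qed

theorem corollary3:
  shows "\<exists>(c::real) (N::nat). \<forall>n \<ge> N. \<forall>E. simple_graph n E \<longrightarrow>
           real (real_dim (qwoa_dla n E)) \<le> c * real n ^ 4"
proof (intro exI[of _ "9::real"] exI[of _ "1::nat"] allI impI)
  fix n :: nat and E :: "nat \<Rightarrow> nat \<Rightarrow> bool"
  assume "1 \<le> n"
  have "real_dim (qwoa_dla n E) \<le> 1 + 2 * (n * n + 1)^2"
    unfolding real_dim_def
    by (rule dim_le_if_subset_diag_block_span[OF _ qwoa_dla_subset_diag_block_span])
       (simp add: cut_value_le)
  also have "\<dots> \<le> 9 * n ^ 4"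
    using \<open>1 \<le> n\<close> by (rule quartic_bound)
  finally show "real (real_dim (qwoa_dla n E)) \<le> 9 * real n ^ 4"
    by (metis of_nat_le_iff of_nat_mult of_nat_numeral of_nat_power)
qed

end
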